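(* Let $\gamma\ge 0$ and define $R(A)=\mathrm{vol}_g(A)+\nu_S\,\mathrm{unit}(A)+\gamma\,\mathrm{pen}(A)$ for $A\subseteq V'$. Use the convention $x/0=+\infty$ for $x>0$. 1. For every $f\in\mathbb{R}^m_+\setminus\{0\}$, $$\frac{R^L(f)}{\mathrm{assoc}_S^L(f)}\ \ge\ \min_{i=1,\dots,m}\frac{R(A_i)}{\mathrm{assoc}_S(A_i)},\qquad A_i=\{j\in V': f_j\ge f_i\}.$$ 2. Consequently, $$\min_{f\in\mathbb{R}^m_+\setminus\{0\}}\frac{R^L(f)}{\mathrm{assoc}^L_S(f)}=\min_{\emptyset\ne A\subseteq V'}\frac{R(A)}{\mathrm{assoc}_S(A)},$$ and the minimum on the left is attained. 3. For any minimizer $f^*$ of the left-hand problem, a set $A^*$ chosen among the thresholded sets $A_i=\{j\in V':f^*_j\ge f^*_i\}$, $i=1,\dots,m$, so as to minimize $R(A_i)/\mathrm{assoc}_S(A_i)$, is a minimizer of the right-hand (set) problem.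
   Context: Let $V$ be a finite vertex set with symmetric nonnegative weights $w_{ij}=w_{ji}\ge0$ and $w_{ii}=0$. - $d_i=\sum_{j\in V}w_{ij}$, and $\mathrm{vol}_h(A)=\sum_{i\in A}h_i$. - $\mathrm{assoc}(A)=\sum_{i,j\in A}w_{ij}$ (ordered pairs), and $\mathrm{cut}(A,B)=\sum_{i\in A,j\in B}w_{ij}$. - Fix $S\subseteq V$, $V'=V\setminus S$, $m=|V'|$, and identify $V'$ with $\{1,\dots,m\}$. - $d^S_i=\sum_{j\in S}w_{ij}$, $g:V\to(0,\infty)$, $\mu_S=\mathrm{assoc}(S)$, $\nu_S=\mathrm{vol}_g(S)$. - $\mathrm{unit}(A)=1$ if $A\ne\emptyset$ and $0$ otherwise. - $\mathrm{assoc}_S(A)=\mathrm{vol}_d(A)-\mathrm{cut}(A,V'\setminus A)+\mathrm{vol}_{d^S}(A)+\mu_S\,\mathrm{unit}(A)$ for $A\subseteq V'$. Constraint data: $M_1,\dots,M_p\in[0,\infty)^V$; reals $k_j,l_j$; a symmetric $\mathrm{dist}:V\times V\to[0,\infty)$ with $\mathrm{dist}(u,u)=0$; and $d_0\ge0$. Penalty: $\mathrm{pen}(\emptyset)=0$, and for $A\ne\emptyset$, $$\mathrm{pen}(A)=\sum_{j}\max\{0,\mathrm{vol}_{M_j}(A)-l_j\}+\sum_j\max\{0,k_j-\mathrm{vol}_{M_j}(A)\}+\sum_{u,v\in A}\max\{0,\mathrm{dist}(u,v)-d_0\}.$$ Lovasz extension: for a set function $F:2^{V'}\to\mathbb{R}$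 with $F(\emptyset)=0$ and $f\in\mathbb{R}^m$, choose a permutation $\pi$ with $f_{\pi(1)}\le\dots\le f_{\pi(m)}$ and let $B_i=\{\pi(i),\dots,\pi(m)\}$. Then $$F^L(f)=\sum_{i=1}^{m-1}F(B_{i+1})\,(f_{\pi(i+1)}-f_{\pi(i)})+F(V')\,f_{\pi(1)}.$$ *)

theory Defs
  imports Main "HOL-Library.Extended_Real"
begin

definition vol :: "('a \<Rightarrow> real) \<Rightarrow> 'a set \<Rightarrow> real" where
  "vol h A = (\<Sum>i\<in>A. h i)"

definition assoc :: "('a \<Rightarrow> 'a \<Rightarrow> real) \<Rightarrow> 'a set \<Rightarrow> real" where
  "assoc w A = (\<Sum>i\<in>A. \<Sum>j\<in>A. w i j)"

definition cut :: "('a \<Rightarrow> 'a \<Rightarrow> real) \<Rightarrow> 'a set \<Rightarrow> 'a set \<Rightarrow> real" where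
  "cut w A B = (\<Sum>i\<in>A. \<Sum>j\<in>B. w i j)"

definition unit_set :: "'a set \<Rightarrow> real" where
  "unit_set A = (if A = {} then 0 else 1)"

definition assocS :: "('a \<Rightarrow> 'a \<Rightarrow> real) \<Rightarrow> 'a set \<Rightarrow> 'a set \<Rightarrow> 'a set \<Rightarrow> real" where
  "assocS w V S A =
     vol (\<lambda>i. \<Sum>j\<in>V. w i j) A - cut w A ((V - S) - A)
     + vol (\<lambda>i. \<Sum>j\<in>S. w i j) A + assoc w S * unit_set A"

definition pen :: "nat \<Rightarrow> (nat \<Rightarrow> 'a \<Rightarrow> real) \<Rightarrow> (nat \<Rightarrow> real) \<Rightarrow> (nat \<Rightarrow> real)
    \<Rightarrow> ('a \<Rightarrow> 'a \<Rightarrow> real) \<Rightarrow> real \<Rightarrow> 'a set \<Rightarrow> real" where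
  "pen p M k l dst d0 A =
     (if A = {} then 0 else
        (\<Sum>j<p. max 0 (vol (M j) A - l j))
      + (\<Sum>j<p. max 0 (k j - vol (M j) A))
      + (\<Sum>u\<in>A. \<Sum>v\<in>A. max 0 (dst u v - d0)))"

definition lovasz :: "('a set \<Rightarrow> real) \<Rightarrow> 'a set \<Rightarrow> ('a \<Rightarrow> real) \<Rightarrow> real" where
  "lovasz F V' f =
     (let m = card V';
          \<pi> = (SOME \<pi>. bij_betw \<pi> {1..m} V' \<and>
                   (\<forall>i j. 1 \<le> i \<longrightarrow> i \<le> j \<longrightarrow> j \<le> m \<longrightarrow> f (\<pi> i) \<le> f (\<pi> j)));
          B = (\<lambda>i. \<pi> ` {i..m})
      in (\<Sum>i\<in>{1..m-1}. F (B (i+1)) * (f (\<pi> (i+1)) - f (\<pi> i))) + F V' * f (\<pi> 1))"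

text \<open>Ratio with the convention x/0 = +infinity (numerators are positive here).\<close>
definition ratio :: "real \<Rightarrow> real \<Rightarrow> ereal" where
  "ratio x y = (if y = 0 then PInfty else ereal (x / y))"

definition nonneg_nonzero :: "'a set \<Rightarrow> ('a \<Rightarrow> real) set" where
  "nonneg_nonzero V' = {f. (\<forall>x\<in>V'. 0 \<le> f x) \<and> (\<exists>x\<in>V'. f x \<noteq> 0) \<and> (\<forall>x. x \<notin> V' \<longrightarrow> f x = 0)}"

definition thr :: "'a set \<Rightarrow> ('a \<Rightarrow> real) \<Rightarrow> 'a \<Rightarrow> 'a set" where
  "thr V' f i = {j\<in>V'. f i \<le> f j}"

end

theory Submission
  imports Defs
begin

text \<open>Sorting the entries of \<open>f\<close> as \<open>f(\<pi> 1) \<le> \<dots> \<le> f(\<pi> m)\<close>, the Lovasz extension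
  \<open>F\<^sup>L(f)\<close> is a combination of the values \<open>F(A\<^sub>i)\<close> on the upper level sets
  \<open>A\<^sub>i = {j. f j \<ge> f(\<pi> i)}\<close> with the nonnegative weights \<open>f(\<pi> 1), f(\<pi> 2) - f(\<pi> 1), \<dots>\<close>,
  the same weights for every \<open>F\<close>. Hence \<open>R\<^sup>L(f) / assoc\<^sub>S\<^sup>L(f)\<close> is a mediant of the
  ratios \<open>R(A\<^sub>i) / assoc\<^sub>S(A\<^sub>i)\<close> and is at least their minimum. Conversely, the
  extension of the indicator vector of \<open>A\<close> takes the value \<open>F(A)\<close>, so both minimisation
  problems have the same value, and thresholding a minimiser recovers an optimal set.\<close>

lemma ratio_weighted_sum_ge:
  fixes I :: "'i set" and c a b :: "'i \<Rightarrow> real" and r :: ereal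
  assumes fin: "finite I" and c0: "\<forall>i\<in>I. 0 \<le> c i" and a0: "\<forall>i\<in>I. 0 \<le> a i"
    and b0: "\<forall>i\<in>I. 0 \<le> b i"
    and hr: "\<forall>i\<in>I. 0 < c i \<longrightarrow> r \<le> ratio (a i) (b i)"
  shows "r \<le> ratio (\<Sum>i\<in>I. c i * a i) (\<Sum>i\<in>I. c i * b i)"
proof (cases "(\<Sum>i\<in>I. c i * b i) = 0")
  case True
  then show ?thesis by (simp add: ratio_def)
next
  case False
  then obtain i where i: "i \<in> I" "c i * b i \<noteq> 0"
    using sum.not_neutral_contains_not_neutral by blast
  have ci: "c i > 0" "b i > 0" using i c0 b0 by (simp_all add: less_le)
  have pos: "(\<Sum>i\<in>I. c i * b i) > 0"
    using False c0 b0 by (simp add: less_le sum_nonneg)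
  show ?thesis
  proof (cases r)
    case (real \<rho>)
    have term_ge: "\<rho> * (c j * b j) \<le> c j * a j" if j: "j \<in> I" for j
    proof (cases "c j = 0 \<or> b j = 0")
      case True
      with a0 c0 j show ?thesis by (auto simp: mult_nonneg_nonneg)
    next
      case False
      then have cj: "c j > 0" and bj: "b j > 0" using c0 b0 j by (auto simp: less_le)
      have "r \<le> ratio (a j) (b j)" using hr j cj by blast
      then have "\<rho> \<le> a j / b j" using bj real by (simp add: ratio_def)
      then have "\<rho> * b j \<le> a j" using bj by (simp add: pos_le_divide_eq)
      then have "c j * (\<rho> * b j) \<le> c j * a j" using cj by (simp add: mult_left_mono)
      then show ?thesis by (simp add: algebra_simps)
    qed
    have "\<rho> * (\<Sum>i\<in>I. c i * b i) \<le> (\<Sum>i\<in>I. c i * a i)"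
      unfolding sum_distrib_left using term_ge by (simp add: sum_mono)
    then have "\<rho> \<le> (\<Sum>i\<in>I. c i * a i) / (\<Sum>i\<in>I. c i * b i)"
      using pos by (simp add: pos_le_divide_eq)
    then show ?thesis using real False by (simp add: ratio_def)
  next
    case PInf
    have "r \<le> ratio (a i) (b i)" using hr i ci by blast
    then show ?thesis using PInf ci by (simp add: ratio_def)
  next
    case MInf
    then show ?thesis by simp
  qed
qed

lemma ex_sorting_enumeration:
  fixes f :: "'a \<Rightarrow> real"
  assumes "finite V'"
  shows "\<exists>\<pi>. bij_betw \<pi> {1..card V'} V' \<and>
     (\<forall>i j. 1 \<le> i \<longrightarrow> i \<le> j \<longrightarrow> j \<le> card V' \<longrightarrow> f (\<pi> i) \<le> f (\<pi> j))"
proof -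
  obtain xs where xs: "set xs = V'" "distinct xs" using finite_distinct_list assms by blast
  define ys where "ys = sort_key f xs"
  have ys: "set ys = V'" "distinct ys" "sorted (map f ys)" "length ys = card V'"
    using xs unfolding ys_def by (auto simp: distinct_card[symmetric])
  define \<pi> where "\<pi> i = ys ! (i - 1)" for i
  have "inj_on \<pi> {1..card V'}"
    unfolding inj_on_def \<pi>_def using ys by (auto simp: nth_eq_iff_index_eq)
  moreover have "\<pi> ` {1..card V'} = V'"
  proof
    show "\<pi> ` {1..card V'} \<subseteq> V'" unfolding \<pi>_def using ys by auto
    show "V' \<subseteq> \<pi> ` {1..card V'}"
    proof
      fix x assume "x \<in> V'"
      then obtain k where "k < length ys" "ys ! k = x" using ys by (metis in_set_conv_nth)
      then have "Suc k \<in> {1..card V'}" "\<pi> (Suc k) = x" using ys by (auto simp: \<pi>_def)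
      then show "x \<in> \<pi> ` {1..card V'}" by blast
    qed
  qed
  moreover have "\<forall>i j. 1 \<le> i \<longrightarrow> i \<le> j \<longrightarrow> j \<le> card V' \<longrightarrow> f (\<pi> i) \<le> f (\<pi> j)"
  proof (intro allI impI)
    fix i j :: nat assume h: "1 \<le> i" "i \<le> j" "j \<le> card V'"
    have "map f ys ! (i - 1) \<le> map f ys ! (j - 1)"
      using sorted_nth_mono[OF ys(3), of "i - 1" "j - 1"] h ys by auto
    then show "f (\<pi> i) \<le> f (\<pi> j)" using h ys by (simp add: \<pi>_def)
  qed
  ultimately show ?thesis unfolding bij_betw_def by blast
qed

text \<open>Shifted by one against the paper: \<open>lovasz_weight (f \<circ> \<pi>) i\<close> is the coefficient of the
  level set \<open>\<pi> ` {i+1..m}\<close>, so index \<open>0\<close> carries \<open>F V'\<close> with weight \<open>f (\<pi> 1)\<close>.\<close>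
definition lovasz_weight :: "(nat \<Rightarrow> real) \<Rightarrow> nat \<Rightarrow> real" where
  "lovasz_weight h i = (if i = 0 then h 1 else h (i + 1) - h i)"

lemma sum_lovasz_weight: "(\<Sum>i<Suc n. lovasz_weight h i) = h (Suc n)"
  by (induction n) (auto simp: lovasz_weight_def)

lemma lovasz_weight_nonneg:
  assumes "\<forall>i j. 1 \<le> i \<longrightarrow> i \<le> j \<longrightarrow> j \<le> m \<longrightarrow> h i \<le> h j" and "0 \<le> h 1" and "i < m"
  shows "0 \<le> lovasz_weight h i"
  using assms by (simp add: lovasz_weight_def)

lemma lovasz_weight_pos_cases:
  "0 < lovasz_weight (f \<circ> \<pi>) i \<Longrightarrow> i = 0 \<or> f (\<pi> i) < f (\<pi> (i + 1))"
  by (auto simp: lovasz_weight_def split: if_splits)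

lemma lovasz_eq_weighted_sum:
  fixes f :: "'a \<Rightarrow> real"
  assumes fin: "finite V'" and ne: "V' \<noteq> {}" and m: "card V' = m"
  obtains \<pi> where "bij_betw \<pi> {1..m} V'"
    "\<forall>i j. 1 \<le> i \<longrightarrow> i \<le> j \<longrightarrow> j \<le> m \<longrightarrow> f (\<pi> i) \<le> f (\<pi> j)"
    "\<And>F. lovasz F V' f = (\<Sum>i<m. lovasz_weight (f \<circ> \<pi>) i * F (\<pi> ` {i+1..m}))"
proof -
  have m1: "m \<ge> 1" using fin ne unfolding m[symmetric] by (simp add: Suc_le_eq card_gt_0_iff)
  define \<pi> where "\<pi> = (SOME \<pi>. bij_betw \<pi> {1..m} V' \<and>
                   (\<forall>i j. 1 \<le> i \<longrightarrow> i \<le> j \<longrightarrow> j \<le> m \<longrightarrow> f (\<pi> i) \<le> f (\<pi> j)))"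
  have \<pi>: "bij_betw \<pi> {1..m} V' \<and> (\<forall>i j. 1 \<le> i \<longrightarrow> i \<le> j \<longrightarrow> j \<le> m \<longrightarrow> f (\<pi> i) \<le> f (\<pi> j))"
    unfolding \<pi>_def using ex_sorting_enumeration[OF fin, of f, unfolded m] by (rule someI_ex)
  have rep: "lovasz F V' f = (\<Sum>i<m. lovasz_weight (f \<circ> \<pi>) i * F (\<pi> ` {i+1..m}))" for F
  proof -
    have L: "lovasz F V' f
      = (\<Sum>i\<in>{1..m-1}. F (\<pi> ` {i+1..m}) * (f (\<pi> (i+1)) - f (\<pi> i))) + F V' * f (\<pi> 1)"
      unfolding lovasz_def Let_def \<pi>_def m by simp
    have "{..<m} = insert 0 {1..m-1}" using m1 by auto
    then have "(\<Sum>i<m. lovasz_weight (f \<circ> \<pi>) i * F (\<pi> ` {i+1..m}))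
      = f (\<pi> 1) * F (\<pi> ` {1..m})
        + (\<Sum>i\<in>{1..m-1}. lovasz_weight (f \<circ> \<pi>) i * F (\<pi> ` {i+1..m}))"
      by (simp add: lovasz_weight_def)
    also have "(\<Sum>i\<in>{1..m-1}. lovasz_weight (f \<circ> \<pi>) i * F (\<pi> ` {i+1..m}))
      = (\<Sum>i\<in>{1..m-1}. F (\<pi> ` {i+1..m}) * (f (\<pi> (i+1)) - f (\<pi> i)))"
      by (rule sum.cong) (auto simp: lovasz_weight_def)
    also have "\<pi> ` {1..m} = V'" using \<pi> by (simp add: bij_betw_def)
    finally show ?thesis using L by (simp add: comp_def mult.commute)
  qed
  from \<pi> show ?thesis
    by (intro that[OF _ _ rep]) simp_all
qed

text \<open>A level set \<open>\<pi> ` {i+1..m}\<close> is a threshold set unless it splits a tie of \<open>f\<close>; ties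
  are exactly the indices where the weight vanishes.\<close>
lemma level_set_eq_thr:
  fixes f :: "'a \<Rightarrow> real" and \<pi> :: "nat \<Rightarrow> 'a"
  assumes bij: "bij_betw \<pi> {1..m} V'"
    and sorted: "\<forall>i j. 1 \<le> i \<longrightarrow> i \<le> j \<longrightarrow> j \<le> m \<longrightarrow> f (\<pi> i) \<le> f (\<pi> j)"
    and im: "i < m" and jump: "i = 0 \<or> f (\<pi> i) < f (\<pi> (i+1))"
  shows "\<pi> ` {i+1..m} = thr V' f (\<pi> (i+1))"
proof
  have img: "\<pi> ` {1..m} = V'" using bij by (simp add: bij_betw_def)
  show "\<pi> ` {i+1..m} \<subseteq> thr V' f (\<pi> (i+1))"
    using img sorted by (force simp: thr_def)
  show "thr V' f (\<pi> (i+1)) \<subseteq> \<pi> ` {i+1..m}"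
  proof
    fix x assume "x \<in> thr V' f (\<pi> (i+1))"
    then have x: "x \<in> V'" "f (\<pi> (i+1)) \<le> f x" by (auto simp: thr_def)
    then obtain k where k: "k \<in> {1..m}" "x = \<pi> k" using img by blast
    have "k \<ge> i + 1"
    proof (rule ccontr)
      assume "\<not> k \<ge> i + 1"
      then have "f (\<pi> k) \<le> f (\<pi> i)" "f (\<pi> i) < f (\<pi> (i+1))"
        using sorted k im jump by auto
      then show False using x k by auto
    qed
    then show "x \<in> \<pi> ` {i+1..m}" using k by auto
  qed
qed

lemma lovasz_ratio_ge_Min_thr_ratio:
  fixes f :: "'a \<Rightarrow> real" and F G :: "'a set \<Rightarrow> real"
  assumes fin: "finite V'" and ne: "V' \<noteq> {}" and f: "f \<in> nonneg_nonzero V'"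
    and F0: "\<forall>A. A \<subseteq> V' \<longrightarrow> 0 \<le> F A" and G0: "\<forall>A. A \<subseteq> V' \<longrightarrow> 0 \<le> G A"
  shows "Min ((\<lambda>i. ratio (F (thr V' f i)) (G (thr V' f i))) ` V')
           \<le> ratio (lovasz F V' f) (lovasz G V' f)"
proof -
  let ?thr_ratio = "\<lambda>i. ratio (F (thr V' f i)) (G (thr V' f i))"
  define m where "m = card V'"
  obtain \<pi> where bij: "bij_betw \<pi> {1..m} V'"
    and sorted: "\<forall>i j. 1 \<le> i \<longrightarrow> i \<le> j \<longrightarrow> j \<le> m \<longrightarrow> f (\<pi> i) \<le> f (\<pi> j)"
    and rep: "\<And>F. lovasz F V' f = (\<Sum>i<m. lovasz_weight (f \<circ> \<pi>) i * F (\<pi> ` {i+1..m}))"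
    using lovasz_eq_weighted_sum[OF fin ne m_def[symmetric]] by blast
  have img: "\<pi> ` {1..m} = V'" using bij by (simp add: bij_betw_def)
  have weight0: "\<forall>i\<in>{..<m}. 0 \<le> lovasz_weight (f \<circ> \<pi>) i"
  proof
    fix i assume i: "i \<in> {..<m}"
    then have "\<pi> 1 \<in> V'" using img by force
    then have "0 \<le> (f \<circ> \<pi>) 1" using f by (simp add: nonneg_nonzero_def)
    then show "0 \<le> lovasz_weight (f \<circ> \<pi>) i"
      using lovasz_weight_nonneg[of m "f \<circ> \<pi>" i] sorted i by simp
  qed
  have level_set_bound: "\<forall>i\<in>{..<m}. 0 < lovasz_weight (f \<circ> \<pi>) i \<longrightarrow>
      Min (?thr_ratio ` V') \<le> ratio (F (\<pi> ` {i+1..m})) (G (\<pi> ` {i+1..m}))"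
  proof (intro ballI impI)
    fix i assume "i \<in> {..<m}" and pos: "0 < lovasz_weight (f \<circ> \<pi>) i"
    then have i: "i < m" by simp
    have "\<pi> (i+1) \<in> V'" using img i by force
    then have "Min (?thr_ratio ` V') \<le> ?thr_ratio (\<pi> (i+1))"
      by (rule Min_le[OF finite_imageI[OF fin] imageI])
    also have "thr V' f (\<pi> (i+1)) = \<pi> ` {i+1..m}"
      using level_set_eq_thr[OF bij sorted i] lovasz_weight_pos_cases[OF pos] by simp
    finally show "Min (?thr_ratio ` V') \<le> ratio (F (\<pi> ` {i+1..m})) (G (\<pi> ` {i+1..m}))" .
  qed
  have "\<pi> ` {i+1..m} \<subseteq> V'" for i using img by auto
  then have "\<forall>i\<in>{..<m}. 0 \<le> F (\<pi> ` {i+1..m})" "\<forall>i\<in>{..<m}. 0 \<le> G (\<pi> ` {i+1..m})"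
    by (simp_all add: F0 G0)
  then show ?thesis
    unfolding rep by (rule ratio_weighted_sum_ge[OF finite_lessThan weight0 _ _ level_set_bound])
qed

lemma lovasz_indicator:
  fixes F :: "'a set \<Rightarrow> real"
  assumes fin: "finite V'" and AV: "A \<subseteq> V'" and A: "A \<noteq> {}"
  shows "lovasz F V' (\<lambda>x. if x \<in> A then 1 else 0) = F A"
proof -
  define f :: "'a \<Rightarrow> real" where "f = (\<lambda>x. if x \<in> A then 1 else 0)"
  define m where "m = card V'"
  have ne: "V' \<noteq> {}" using AV A by auto
  have m1: "m \<ge> 1" using fin ne unfolding m_def by (simp add: Suc_le_eq card_gt_0_iff)
  obtain \<pi> where bij: "bij_betw \<pi> {1..m} V'"
    and sorted: "\<forall>i j. 1 \<le> i \<longrightarrow> i \<le> j \<longrightarrow> j \<le> m \<longrightarrow> f (\<pi> i) \<le> f (\<pi> j)"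
    and rep: "\<And>F. lovasz F V' f = (\<Sum>i<m. lovasz_weight (f \<circ> \<pi>) i * F (\<pi> ` {i+1..m}))"
    using lovasz_eq_weighted_sum[OF fin ne m_def[symmetric]] by blast
  have img: "\<pi> ` {1..m} = V'" using bij by (simp add: bij_betw_def)
  have level_set_A: "lovasz_weight (f \<circ> \<pi>) i * F (\<pi> ` {i+1..m}) = lovasz_weight (f \<circ> \<pi>) i * F A"
    if i: "i < m" for i
  proof (cases "0 < lovasz_weight (f \<circ> \<pi>) i")
    case True
    have "f (\<pi> (i+1)) \<noteq> 0"
    proof
      assume "f (\<pi> (i+1)) = 0"
      then have "lovasz_weight (f \<circ> \<pi>) i \<le> 0"
        by (cases "i = 0") (simp_all add: lovasz_weight_def f_def)
      with True show False by simp
    qed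
    then have "thr V' f (\<pi> (i+1)) = A" using AV by (auto simp: thr_def f_def)
    with level_set_eq_thr[OF bij sorted i lovasz_weight_pos_cases[OF True]] show ?thesis by simp
  next
    case False
    moreover have "0 \<le> lovasz_weight (f \<circ> \<pi>) i"
      using lovasz_weight_nonneg[of m "f \<circ> \<pi>" i] sorted i by (simp add: f_def)
    ultimately show ?thesis by simp
  qed
  have "f (\<pi> m) = 1"
  proof -
    obtain a where a: "a \<in> A" using A by blast
    then obtain k where k: "k \<in> {1..m}" "\<pi> k = a" using img AV by blast
    then have "f a \<le> f (\<pi> m)" using sorted[rule_format, of k m] by simp
    then show ?thesis using a by (simp add: f_def split: if_splits)
  qed
  then have weight_sum: "(\<Sum>i<m. lovasz_weight (f \<circ> \<pi>) i) = 1"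
    using sum_lovasz_weight[of "f \<circ> \<pi>" "m - 1"] m1 by simp
  have "lovasz F V' f = (\<Sum>i<m. lovasz_weight (f \<circ> \<pi>) i * F A)"
    unfolding rep using level_set_A by (intro sum.cong) auto
  also have "\<dots> = F A"
    by (simp add: sum_distrib_right[symmetric] weight_sum)
  finally show ?thesis unfolding f_def .
qed

lemma indicator_nonneg_nonzero:
  assumes "A \<subseteq> V'" "A \<noteq> {}"
  shows "(\<lambda>x. if x \<in> A then 1 else 0 :: real) \<in> nonneg_nonzero V'"
  using assms by (auto simp: nonneg_nonzero_def)

lemma Min_set_ratio_le_lovasz_ratio:
  fixes F G :: "'a set \<Rightarrow> real"
  assumes fin: "finite V'" and ne: "V' \<noteq> {}" and f: "f \<in> nonneg_nonzero V'"
    and F0: "\<forall>A. A \<subseteq> V' \<longrightarrow> 0 \<le> F A" and G0: "\<forall>A. A \<subseteq> V' \<longrightarrow> 0 \<le> G A"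
  shows "Min {ratio (F A) (G A) | A. A \<subseteq> V' \<and> A \<noteq> {}} \<le> ratio (lovasz F V' f) (lovasz G V' f)"
proof -
  let ?thr_ratio = "\<lambda>i. ratio (F (thr V' f i)) (G (thr V' f i))"
  let ?set_ratios = "{ratio (F A) (G A) | A. A \<subseteq> V' \<and> A \<noteq> {}}"
  have "?thr_ratio ` V' \<subseteq> ?set_ratios"
    by (auto simp: thr_def)
  moreover have "Min (?thr_ratio ` V') \<in> ?thr_ratio ` V'"
    using fin ne by (intro Min_in) auto
  moreover have "finite ?set_ratios"
    using fin by (simp add: setcompr_eq_image)
  ultimately have "Min ?set_ratios \<le> Min (?thr_ratio ` V')"
    by (meson Min_le subsetD)
  also have "\<dots> \<le> ratio (lovasz F V' f) (lovasz G V' f)"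
    by (rule lovasz_ratio_ge_Min_thr_ratio[OF fin ne f F0 G0])
  finally show ?thesis .
qed

lemma lovasz_ratio_attains_Min_set_ratio:
  fixes F G :: "'a set \<Rightarrow> real"
  assumes fin: "finite V'" and ne: "V' \<noteq> {}"
  shows "\<exists>f\<in>nonneg_nonzero V'.
    ratio (lovasz F V' f) (lovasz G V' f) = Min {ratio (F A) (G A) | A. A \<subseteq> V' \<and> A \<noteq> {}}"
proof -
  have "Min {ratio (F A) (G A) | A. A \<subseteq> V' \<and> A \<noteq> {}} \<in> {ratio (F A) (G A) | A. A \<subseteq> V' \<and> A \<noteq> {}}"
    using fin ne by (intro Min_in) (auto simp: setcompr_eq_image)
  then obtain A where A: "A \<subseteq> V'" "A \<noteq> {}"
    and Min_eq: "Min {ratio (F A) (G A) | A. A \<subseteq> V' \<and> A \<noteq> {}} = ratio (F A) (G A)"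
    by blast
  show ?thesis
    using indicator_nonneg_nonzero[OF A] lovasz_indicator[OF fin A] Min_eq by (intro bexI) auto
qed

lemma thr_of_lovasz_minimizer_is_set_minimizer:
  fixes F G :: "'a set \<Rightarrow> real"
  assumes fin: "finite V'" and fs: "fs \<in> nonneg_nonzero V'"
    and F0: "\<forall>A. A \<subseteq> V' \<longrightarrow> 0 \<le> F A" and G0: "\<forall>A. A \<subseteq> V' \<longrightarrow> 0 \<le> G A"
    and fs_min: "\<forall>h\<in>nonneg_nonzero V'. ratio (lovasz F V' fs) (lovasz G V' fs)
                                      \<le> ratio (lovasz F V' h) (lovasz G V' h)"
    and i: "i \<in> V'"
    and i_min: "\<forall>j\<in>V'. ratio (F (thr V' fs i)) (G (thr V' fs i))
                        \<le> ratio (F (thr V' fs j)) (G (thr V' fs j))"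
    and B: "B \<subseteq> V'" "B \<noteq> {}"
  shows "ratio (F (thr V' fs i)) (G (thr V' fs i)) \<le> ratio (F B) (G B)"
proof -
  have ne: "V' \<noteq> {}" using i by auto
  have "ratio (F (thr V' fs i)) (G (thr V' fs i))
      \<le> Min ((\<lambda>j. ratio (F (thr V' fs j)) (G (thr V' fs j))) ` V')"
    using fin ne i_min by (intro Min.boundedI) auto
  also have "\<dots> \<le> ratio (lovasz F V' fs) (lovasz G V' fs)"
    by (rule lovasz_ratio_ge_Min_thr_ratio[OF fin ne fs F0 G0])
  also have "\<dots> \<le> ratio (F B) (G B)"
    using fs_min indicator_nonneg_nonzero[OF B] lovasz_indicator[OF fin B] by metis
  finally show ?thesis .
qed

lemma vol_nonneg: "(\<And>i. i \<in> A \<Longrightarrow> 0 \<le> h i) \<Longrightarrow> 0 \<le> vol h A"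
  unfolding vol_def by (rule sum_nonneg)

lemma pen_nonneg: "0 \<le> pen p M k l dst d0 A"
  unfolding pen_def by (auto intro!: sum_nonneg add_nonneg_nonneg)

lemma assocS_nonneg:
  assumes finV: "finite V" and SV: "S \<subseteq> V" and w0: "\<forall>i\<in>V. \<forall>j\<in>V. 0 \<le> w i j"
    and A: "A \<subseteq> V - S"
  shows "0 \<le> assocS w V S A"
proof -
  have "(\<Sum>j\<in>(V - S) - A. w i j) \<le> (\<Sum>j\<in>V. w i j)" if "i \<in> A" for i
    using finV A w0 that by (intro sum_mono2) auto
  then have "cut w A ((V - S) - A) \<le> vol (\<lambda>i. \<Sum>j\<in>V. w i j) A"
    unfolding cut_def vol_def by (rule sum_mono)
  moreover have "0 \<le> vol (\<lambda>i. \<Sum>j\<in>S. w i j) A"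
    using A SV w0 by (intro vol_nonneg sum_nonneg) blast
  moreover have "0 \<le> assoc w S"
    unfolding assoc_def using SV w0 by (intro sum_nonneg) blast
  ultimately show ?thesis unfolding assocS_def unit_set_def by simp
qed

theorem theorem2:
  fixes V S :: "'a set" and w :: "'a \<Rightarrow> 'a \<Rightarrow> real" and g :: "'a \<Rightarrow> real"
    and p :: nat and M :: "nat \<Rightarrow> 'a \<Rightarrow> real" and k l :: "nat \<Rightarrow> real"
    and dst :: "'a \<Rightarrow> 'a \<Rightarrow> real" and d0 \<gamma> :: real
    and V' :: "'a set" and R :: "'a set \<Rightarrow> real" and aS :: "'a set \<Rightarrow> real"
  assumes finV: "finite V" and SV: "S \<subseteq> V"
    and w_sym: "\<forall>i\<in>V. \<forall>j\<in>V. w i j = w j i"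
    and w_nonneg: "\<forall>i\<in>V. \<forall>j\<in>V. 0 \<le> w i j"
    and w_diag: "\<forall>i\<in>V. w i i = 0"
    and g_pos: "\<forall>i\<in>V. 0 < g i"
    and M_nonneg: "\<forall>j<p. \<forall>x\<in>V. 0 \<le> M j x"
    and dist_sym: "\<forall>u\<in>V. \<forall>v\<in>V. dst u v = dst v u"
    and dist_nonneg: "\<forall>u\<in>V. \<forall>v\<in>V. 0 \<le> dst u v"
    and dist_diag: "\<forall>u\<in>V. dst u u = 0"
    and d0_nonneg: "0 \<le> d0"
    and gamma_nonneg: "0 \<le> \<gamma>"
    and V'_ne: "V - S \<noteq> {}"
  defines "V' \<equiv> V - S"
    and "R \<equiv> (\<lambda>A. vol g A + vol g S * unit_set A + \<gamma> * pen p M k l dst d0 A)"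
    and "aS \<equiv> assocS w V S"
  shows
    "(\<forall>f\<in>nonneg_nonzero V'.
        ratio (lovasz R V' f) (lovasz aS V' f)
          \<ge> Min ((\<lambda>i. ratio (R (thr V' f i)) (aS (thr V' f i))) ` V'))
   \<and> ((\<exists>f\<in>nonneg_nonzero V'. ratio (lovasz R V' f) (lovasz aS V' f)
            = Min {ratio (R A) (aS A) | A. A \<subseteq> V' \<and> A \<noteq> {}})
      \<and> (\<forall>f\<in>nonneg_nonzero V'. Min {ratio (R A) (aS A) | A. A \<subseteq> V' \<and> A \<noteq> {}}
            \<le> ratio (lovasz R V' f) (lovasz aS V' f)))
   \<and> (\<forall>fs\<in>nonneg_nonzero V'.
        (\<forall>h\<in>nonneg_nonzero V'. ratio (lovasz R V' fs) (lovasz aS V' fs)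
                               \<le> ratio (lovasz R V' h) (lovasz aS V' h)) \<longrightarrow>
        (\<forall>i\<in>V'. (\<forall>j\<in>V'. ratio (R (thr V' fs i)) (aS (thr V' fs i))
                          \<le> ratio (R (thr V' fs j)) (aS (thr V' fs j))) \<longrightarrow>
                 (\<forall>B. B \<subseteq> V' \<and> B \<noteq> {} \<longrightarrow>
                      ratio (R (thr V' fs i)) (aS (thr V' fs i)) \<le> ratio (R B) (aS B))))"
proof -
  have fin: "finite V'" and ne: "V' \<noteq> {}" using finV V'_ne by (simp_all add: V'_def)
  have R0: "\<forall>A. A \<subseteq> V' \<longrightarrow> 0 \<le> R A"
  proof (intro allI impI)
    fix A assume "A \<subseteq> V'"
    moreover have "\<forall>i\<in>V. 0 \<le> g i" using g_pos by (simp add: less_imp_le)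
    ultimately have "0 \<le> vol g A" "0 \<le> vol g S"
      using SV by (auto intro!: vol_nonneg simp: V'_def)
    moreover have "0 \<le> \<gamma> * pen p M k l dst d0 A"
      by (rule mult_nonneg_nonneg[OF gamma_nonneg pen_nonneg])
    ultimately show "0 \<le> R A"
      unfolding R_def unit_set_def by (simp add: vol_def)
  qed
  have aS0: "\<forall>A. A \<subseteq> V' \<longrightarrow> 0 \<le> aS A"
    using assocS_nonneg[OF finV SV w_nonneg] unfolding aS_def V'_def by blast
  show ?thesis
    apply (intro conjI ballI impI allI)
    subgoal by (rule lovasz_ratio_ge_Min_thr_ratio[OF fin ne _ R0 aS0])
    subgoal by (rule lovasz_ratio_attains_Min_set_ratio[OF fin ne])
    subgoal by (rule Min_set_ratio_le_lovasz_ratio[OF fin ne _ R0 aS0])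
    subgoal by (rule thr_of_lovasz_minimizer_is_set_minimizer[OF fin _ R0 aS0]) auto
    done
qed

end
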